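(* Let $k\ge 2$ and let $s_k$ and $w_k$ be as in the context. Consider the SLP obtained after the first $k-1$ rounds of $\mathsf{RePair}$ on input $s_k$. Its rules other than the start rule are $X_1\to aa$ and $X_i\to X_{i-1}X_{i-1}$ for $2\le i\le k-1$. Its start rule is $S\to u_1bu_2b\cdots u_{k-1}bu_k$. For each $1\le i\le k$, we have $u_i=X_{k-1}^{q_i}v_i$, where $q_i=\lfloor N_i/2^{k-1}\rfloor$ and $N_i$ is the integer with binary representation $w_k[1:k+i]$; in particular $q_i\ge2$. The word $v_i$ is $$v_i=f_{k-2}(w_k[i+2])f_{k-3}(w_k[i+3])\cdots f_1(w_k[k+i-1])f_0(w_k[k+i]),$$ with $f_0(1)=a$, $f_0(0)=\varepsilon$, and for $j\ge1$, $f_j(1)=X_j$, $f_j(0)=\varepsilon$. In particular, in these first $k-1$ rounds the selected strings never contain the letter $b$.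
   Context: All logarithms are to base 2. A straight-line program (SLP) is a context-free grammar with exactly one production $A\to u$, $u$ a nonempty word over nonterminals and terminals, per nonterminal, with acyclic dependencies, so that it derives a single word. For an SLP, a word $\gamma$ over terminals and nonterminals is a maximal string if $|\gamma|\ge2$, $\gamma$ occurs at least twice without overlap in the right-hand sides, and no strictly longer word occurs at least as many times without overlap in the right-hand sides. $\mathsf{RePair}$ on input $w$ starts with the single rule $S\to w$. In each round it selects a maximal string $\gamma$ with the largest number of non-overlapping occurrences, replaces a largest set of pairwise non-overlapping occurrences of $\gamma$ (chosen from left to right) in the right-hand sides by a fresh nonterminal $X$, and adds $X\to\gamma$. It stops when no maximal string exists. For $k\ge2$, fix a binary de Bruijn sequence $B\in\{0,1\}^*$ of order $\lceil\log k\rceil$ that starts with $1$. It has length $2^{\lceil\log k\rceil}$, and each word of length $\lceil\log k\rceil$ occurs at most once as a factor of $B$. Let $h$ be the homomorphism with $h(0)=01$, $h(1)=10$. Put $w_k=h(B[1:k])$, a binary word of length $2k$ with $w_k[1]=1$. Define $$s_k=a^{w_k[1:k+1]}\,b\,a^{w_k[1:k+2]}\,b\cdots a^{w_k[1:2k-1]}\,b\,a^{w_k},$$ where each prefix $w_k[1:k+i]$ is read as a binary number giving the exponent. Here $w[i:j]$ denotes the factor from position $i$ to position $j$. *)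

theory Defs
  imports Complex_Main
begin

(* Symbols of the SLP: terminals a, b and nonterminals NT n.
   NT 0 is the start symbol S; the nonterminal created in round r of RePair is NT r. *)
datatype sym = Ta | Tb | NT nat

(* An SLP state is a list of right-hand sides: element 0 is the rhs of the start rule S = NT 0,
   element r (r \<ge> 1) is the rhs of NT r. *)
type_synonym slp = "sym list list"

definition occ_pos :: "sym list \<Rightarrow> sym list \<Rightarrow> nat set" where
  "occ_pos \<gamma> u = {i. i + length \<gamma> \<le> length u \<and> take (length \<gamma>) (drop i u) = \<gamma>}"

definition nocc :: "sym list \<Rightarrow> sym list \<Rightarrow> nat" where
  "nocc \<gamma> u = Max {card P | P. P \<subseteq> occ_pos \<gamma> u \<and>
       (\<forall>i\<in>P. \<forall>j\<in>P. i < j \<longrightarrow> i + length \<gamma> \<le> j)}"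

definition total_occ :: "slp \<Rightarrow> sym list \<Rightarrow> nat" where
  "total_occ G \<gamma> = sum_list (map (nocc \<gamma>) G)"

definition maximal_string :: "slp \<Rightarrow> sym list \<Rightarrow> bool" where
  "maximal_string G \<gamma> \<longleftrightarrow> length \<gamma> \<ge> 2 \<and> total_occ G \<gamma> \<ge> 2 \<and>
     \<not> (\<exists>\<delta>. length \<delta> > length \<gamma> \<and> total_occ G \<delta> \<ge> total_occ G \<gamma>)"

fun repl :: "sym list \<Rightarrow> sym \<Rightarrow> sym list \<Rightarrow> sym list" where
  "repl \<gamma> X [] = []"
| "repl \<gamma> X (c # u) =
     (if \<gamma> \<noteq> [] \<and> take (length \<gamma>) (c # u) = \<gamma>
      then X # repl \<gamma> X (drop (length \<gamma> - 1) u)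
      else c # repl \<gamma> X u)"

definition repair_step :: "slp \<Rightarrow> slp \<Rightarrow> bool" where
  "repair_step G G' \<longleftrightarrow> (\<exists>\<gamma>. maximal_string G \<gamma> \<and>
      (\<forall>\<delta>. maximal_string G \<delta> \<longrightarrow> total_occ G \<delta> \<le> total_occ G \<gamma>) \<and>
      G' = map (repl \<gamma> (NT (length G))) G @ [\<gamma>])"

definition bin_val :: "bool list \<Rightarrow> nat" where
  "bin_val xs = foldl (\<lambda>n b. 2 * n + (if b then 1 else 0)) 0 xs"

definition hmor :: "bool list \<Rightarrow> bool list" where
  "hmor xs = concat (map (\<lambda>b. if b then [True, False] else [False, True]) xs)"

definition de_bruijn_seq :: "nat \<Rightarrow> bool list \<Rightarrow> bool" where
  "de_bruijn_seq m B \<longleftrightarrow> length B = 2 ^ m \<and> B \<noteq> [] \<and> hd B = True \<and>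
     (\<forall>i j. i + m \<le> length B \<and> j + m \<le> length B \<and>
            take m (drop i B) = take m (drop j B) \<longrightarrow> i = j)"

definition w_word :: "nat \<Rightarrow> bool list \<Rightarrow> bool list" where
  "w_word k B = hmor (take k B)"

definition Nval :: "nat \<Rightarrow> bool list \<Rightarrow> nat \<Rightarrow> nat" where
  "Nval k B i = bin_val (take (k + i) (w_word k B))"

definition s_word :: "nat \<Rightarrow> bool list \<Rightarrow> sym list" where
  "s_word k B = replicate (Nval k B 1) Ta @
     concat (map (\<lambda>i. Tb # replicate (Nval k B i) Ta) [2..<k+1])"

definition qval :: "nat \<Rightarrow> bool list \<Rightarrow> nat \<Rightarrow> nat" where
  "qval k B i = Nval k B i div 2 ^ (k - 1)"

definition fsym :: "nat \<Rightarrow> bool \<Rightarrow> sym list" where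
  "fsym j c = (if c then (if j = 0 then [Ta] else [NT j]) else [])"

(* v_i = f_{k-2}(w[i+2]) ... f_0(w[k+i]) (1-based positions of w) *)
definition vword :: "nat \<Rightarrow> bool list \<Rightarrow> nat \<Rightarrow> sym list" where
  "vword k B i = concat (map (\<lambda>p. fsym (k + i - p) (w_word k B ! (p - 1))) [i+2..<k+i+1])"

definition uword :: "nat \<Rightarrow> bool list \<Rightarrow> nat \<Rightarrow> sym list" where
  "uword k B i = replicate (qval k B i) (NT (k - 1)) @ vword k B i"

definition expected_slp :: "nat \<Rightarrow> bool list \<Rightarrow> slp" where
  "expected_slp k B =
     (uword k B 1 @ concat (map (\<lambda>i. Tb # uword k B i) [2..<k+1]))
     # [Ta, Ta] # map (\<lambda>i. [NT (i - 1), NT (i - 1)]) [2..<k]"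

end

theory Submission
  imports Defs
begin

text \<open>
  After \<open>t\<close> rounds RePair has created \<open>X\<^sub>1 \<rightarrow> aa\<close> and \<open>X\<^sub>j \<rightarrow> X\<^sub>j\<^sub>-\<^sub>1X\<^sub>j\<^sub>-\<^sub>1\<close> for \<open>j \<le> t\<close>,
  and the \<open>i\<close>-th block of the start rule is \<open>X\<^sub>t\<close> to the power \<open>\<lfloor>N\<^sub>i/2\<^sup>t\<rfloor>\<close>, followed by the
  \<open>t\<close> low bits of \<open>N\<^sub>i\<close> with bit \<open>j\<close> written as \<open>X\<^sub>j\<close> (as \<open>a\<close> for \<open>j = 0\<close>).
  In this SLP the pair \<open>X\<^sub>tX\<^sub>t\<close> has at least \<open>C = \<Sum>\<^sub>i \<lfloor>N\<^sub>i/2\<^sup>t\<^sup>+\<^sup>1\<rfloor>\<close> non-overlapping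
  occurrences, and \<open>C \<ge> 2\<^sup>k\<close> because \<open>N\<^sub>k \<ge> 2\<^sup>2\<^sup>k\<^sup>-\<^sup>1\<close>. Every other word of length at least 2
  occurs fewer times: one containing a symbol other than \<open>X\<^sub>t\<close> occurs at most as often as that
  symbol, and there are only \<open>O(k\<^sup>2)\<close> such symbols; a power \<open>X\<^sub>t\<^sup>m\<close> with \<open>m \<ge> 3\<close> occurs at most
  a third as often as \<open>X\<^sub>t\<close>, which occurs at most \<open>2C + k\<close> times. So \<open>X\<^sub>tX\<^sub>t\<close> is the only
  string RePair can select, and replacing it greedily in a block halves the exponent and moves
  bit \<open>t\<close> of \<open>N\<^sub>i\<close> into the tail: this is the SLP after round \<open>t + 1\<close>.
\<close>

section \<open>Non-overlapping occurrences\<close>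

definition disjoint_occs :: "sym list \<Rightarrow> sym list \<Rightarrow> nat set \<Rightarrow> bool" where
  "disjoint_occs \<gamma> u P \<longleftrightarrow> P \<subseteq> occ_pos \<gamma> u \<and> (\<forall>i\<in>P. \<forall>j\<in>P. i < j \<longrightarrow> i + length \<gamma> \<le> j)"

lemma finite_occ_pos: "finite (occ_pos \<gamma> u)"
  by (rule finite_subset[of _ "{..length u}"]) (auto simp: occ_pos_def)

lemma disjoint_occs_finite: "disjoint_occs \<gamma> u P \<Longrightarrow> finite P"
  unfolding disjoint_occs_def using finite_occ_pos finite_subset by blast

lemma nocc_eq_Max: "nocc \<gamma> u = Max (card ` Collect (disjoint_occs \<gamma> u))"
  unfolding nocc_def disjoint_occs_def by (simp add: setcompr_eq_image)

lemma finite_card_disjoint_occs: "finite (card ` Collect (disjoint_occs \<gamma> u))"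
proof -
  have "Collect (disjoint_occs \<gamma> u) \<subseteq> Pow (occ_pos \<gamma> u)"
    by (auto simp: disjoint_occs_def)
  then show ?thesis
    using finite_occ_pos by (meson finite_Pow_iff finite_imageI finite_subset)
qed

lemma card_le_nocc: "disjoint_occs \<gamma> u P \<Longrightarrow> card P \<le> nocc \<gamma> u"
  unfolding nocc_eq_Max by (rule Max_ge[OF finite_card_disjoint_occs]) simp

lemma nocc_attained: obtains P where "disjoint_occs \<gamma> u P" "card P = nocc \<gamma> u"
proof -
  have "disjoint_occs \<gamma> u {}"
    by (simp add: disjoint_occs_def)
  then have "nocc \<gamma> u \<in> card ` Collect (disjoint_occs \<gamma> u)"
    unfolding nocc_eq_Max by (intro Max_in[OF finite_card_disjoint_occs]) auto
  then show ?thesis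
    by (metis imageE mem_Collect_eq that)
qed

lemma nocc_mult_count_le: "nocc \<gamma> u * count_list \<gamma> y \<le> count_list u y"
proof -
  obtain P where P: "disjoint_occs \<gamma> u P" "card P = nocc \<gamma> u"
    by (rule nocc_attained)
  define A where "A i = (\<lambda>p. i + p) ` {p. p < length \<gamma> \<and> \<gamma> ! p = y}" for i
  have card_A: "card (A i) = count_list \<gamma> y" for i
    unfolding A_def count_list_eq_length_filter length_filter_conv_card
    by (subst card_image) (auto simp: inj_on_def eq_commute)
  have "A i \<inter> A j = {}" if "i \<in> P" "j \<in> P" "i \<noteq> j" for i j
  proof -
    have "i + length \<gamma> \<le> j \<or> j + length \<gamma> \<le> i"
      using P(1) that unfolding disjoint_occs_def by (metis linorder_neqE_nat)
    then show ?thesis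
      unfolding A_def by auto
  qed
  then have "card (\<Union>i\<in>P. A i) = (\<Sum>i\<in>P. card (A i))"
    using disjoint_occs_finite[OF P(1)] by (intro card_UN_disjoint) (auto simp: A_def)
  also have "\<dots> = nocc \<gamma> u * count_list \<gamma> y"
    using P(2) by (simp add: card_A)
  finally have card_U: "card (\<Union>i\<in>P. A i) = nocc \<gamma> u * count_list \<gamma> y" .
  have "(\<Union>i\<in>P. A i) \<subseteq> {p. p < length u \<and> u ! p = y}"
  proof
    fix x assume "x \<in> (\<Union>i\<in>P. A i)"
    then obtain i p where ip: "i \<in> P" "p < length \<gamma>" "\<gamma> ! p = y" "x = i + p"
      unfolding A_def by auto
    then have "i \<in> occ_pos \<gamma> u"
      using P(1) unfolding disjoint_occs_def by auto
    then have "i + length \<gamma> \<le> length u" "take (length \<gamma>) (drop i u) ! p = \<gamma> ! p"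
      by (simp_all add: occ_pos_def)
    then show "x \<in> {p. p < length u \<and> u ! p = y}"
      using ip by auto
  qed
  then have "card (\<Union>i\<in>P. A i) \<le> card {p. p < length u \<and> u ! p = y}"
    by (intro card_mono) auto
  also have "\<dots> = count_list u y"
    unfolding count_list_eq_length_filter length_filter_conv_card by (simp add: eq_commute)
  finally show ?thesis
    using card_U by simp
qed

lemma occ_pos_append_left: "i \<in> occ_pos \<gamma> u \<Longrightarrow> i \<in> occ_pos \<gamma> (u @ w)"
  by (auto simp: occ_pos_def)

lemma occ_pos_append_right: "j \<in> occ_pos \<gamma> w \<Longrightarrow> length u + j \<in> occ_pos \<gamma> (u @ w)"
  by (auto simp: occ_pos_def)

lemma nocc_append_ge:
  assumes "\<gamma> \<noteq> []"
  shows "nocc \<gamma> u + nocc \<gamma> w \<le> nocc \<gamma> (u @ w)"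
proof -
  obtain P1 where P1: "disjoint_occs \<gamma> u P1" "card P1 = nocc \<gamma> u"
    by (rule nocc_attained)
  obtain P2 where P2: "disjoint_occs \<gamma> w P2" "card P2 = nocc \<gamma> w"
    by (rule nocc_attained)
  let ?P2' = "(+) (length u) ` P2"
  have left: "i + length \<gamma> \<le> length u" if "i \<in> P1" for i
  proof -
    have "i \<in> occ_pos \<gamma> u"
      using P1(1) that unfolding disjoint_occs_def by blast
    then show ?thesis
      by (simp add: occ_pos_def)
  qed
  have before: "i + length \<gamma> \<le> j" if "i \<in> P1" "j \<in> ?P2'" for i j
    using left[OF that(1)] that(2) by auto
  have "disjoint_occs \<gamma> (u @ w) (P1 \<union> ?P2')"
    unfolding disjoint_occs_def
  proof (intro conjI ballI impI)
    show "P1 \<union> ?P2' \<subseteq> occ_pos \<gamma> (u @ w)"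
      using P1(1) P2(1) occ_pos_append_left[of _ \<gamma> u w] occ_pos_append_right[of _ \<gamma> w u]
      unfolding disjoint_occs_def by blast
  next
    fix i j assume i: "i \<in> P1 \<union> ?P2'" and j: "j \<in> P1 \<union> ?P2'" and "i < j"
    show "i + length \<gamma> \<le> j"
    proof (cases "i \<in> P1")
      case True
      then show ?thesis
        using j \<open>i < j\<close> P1(1) before unfolding disjoint_occs_def by blast
    next
      case False
      then obtain i' where i': "i' \<in> P2" "i = length u + i'"
        using i by blast
      have "j \<notin> P1"
        using left \<open>i < j\<close> i'(2) assms by fastforce
      then obtain j' where "j' \<in> P2" "j = length u + j'"
        using j by blast
      then show ?thesis
        using i' \<open>i < j\<close> P2(1) unfolding disjoint_occs_def by simp
    qed
  qed
  then have "card (P1 \<union> ?P2') \<le> nocc \<gamma> (u @ w)"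
    by (rule card_le_nocc)
  moreover have "P1 \<inter> ?P2' = {}"
    using before assms by fastforce
  then have "card (P1 \<union> ?P2') = card P1 + card P2"
    using disjoint_occs_finite[OF P1(1)] disjoint_occs_finite[OF P2(1)]
    by (simp add: card_Un_disjoint card_image)
  ultimately show ?thesis
    using P1(2) P2(2) by simp
qed

lemma nocc_pair_replicate: "q div 2 \<le> nocc [x, x] (replicate q x)"
proof (induction q rule: nat_induct2)
  case (step q)
  have "disjoint_occs [x, x] [x, x] {0}"
    by (simp add: disjoint_occs_def occ_pos_def)
  then have "1 \<le> nocc [x, x] [x, x]"
    using card_le_nocc by fastforce
  moreover have "nocc [x, x] [x, x] + nocc [x, x] (replicate q x) \<le> nocc [x, x] ([x, x] @ replicate q x)"
    by (rule nocc_append_ge) simp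
  moreover have "replicate (q + 2) x = [x, x] @ replicate q x"
    by (simp add: numeral_2_eq_2)
  ultimately show ?case
    using step by simp
qed simp_all

lemma total_occ_mult_count_le: "total_occ G \<delta> * count_list \<delta> y \<le> count_list (concat G) y"
proof (induction G)
  case (Cons u G)
  then show ?case
    using nocc_mult_count_le[of \<delta> u y] by (simp add: total_occ_def add_mult_distrib)
qed (simp add: total_occ_def)

lemma repair_step_unique_max:
  assumes "2 \<le> length g" "2 \<le> total_occ G g"
    and less: "\<And>\<delta>. 2 \<le> length \<delta> \<Longrightarrow> \<delta> \<noteq> g \<Longrightarrow> total_occ G \<delta> < total_occ G g"
  shows "repair_step G G' \<longleftrightarrow> G' = map (repl g (NT (length G))) G @ [g]"
proof -
  have max_g: "maximal_string G g"
    using assms less unfolding maximal_string_def by (metis leD le_trans less_imp_le_nat)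
  have "total_occ G \<delta> \<le> total_occ G g" if "maximal_string G \<delta>" for \<delta>
    using that less[of \<delta>] unfolding maximal_string_def by fastforce
  moreover have "\<gamma> = g" if "maximal_string G \<gamma>" "total_occ G g \<le> total_occ G \<gamma>" for \<gamma>
    using that less[of \<gamma>] unfolding maximal_string_def by fastforce
  ultimately show ?thesis
    using max_g unfolding repair_step_def by blast
qed

lemma repl_pair_Cons:
  "repl [x, x] Y (c # w) =
     (if c = x \<and> w \<noteq> [] \<and> hd w = x then Y # repl [x, x] Y (tl w) else c # repl [x, x] Y w)"
  by (cases w) auto

lemma repl_pair_notin: "x \<notin> set u \<Longrightarrow> repl [x, x] Y u = u"
  by (induction u) auto

lemma repl_pair_append_sep:
  assumes "s \<noteq> x"
  shows "repl [x, x] Y (u @ s # r) = repl [x, x] Y u @ s # repl [x, x] Y r"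
  using assms by (induction u rule: induct_list012) (simp_all add: repl_pair_Cons del: repl.simps(2))

lemma repl_pair_replicate_append:
  assumes "x \<notin> set v"
  shows "repl [x, x] Y (replicate q x @ v) = replicate (q div 2) Y @ replicate (q mod 2) x @ v"
proof (induction q rule: nat_induct2)
  case 0
  then show ?case
    using assms by (simp add: repl_pair_notin)
next
  case 1
  then show ?case
    using assms by (cases v) (auto simp: repl_pair_notin)
next
  case (step q)
  have "replicate (q + 2) x @ v = x # x # (replicate q x @ v)"
    by (simp add: numeral_2_eq_2)
  moreover have "(q + 2) div 2 = Suc (q div 2)" "(q + 2) mod 2 = q mod 2"
    by simp_all
  ultimately show ?case
    using step by simp
qed

definition sep_concat :: "(nat \<Rightarrow> sym list) \<Rightarrow> nat \<Rightarrow> sym list" where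
  "sep_concat f k = f 1 @ concat (map (\<lambda>i. Tb # f i) [2..<k+1])"

lemma sep_concat_1 [simp]: "sep_concat f (Suc 0) = f (Suc 0)"
  by (simp add: sep_concat_def)

lemma sep_concat_Suc: "1 \<le> k \<Longrightarrow> sep_concat f (Suc k) = sep_concat f k @ Tb # f (Suc k)"
  by (simp add: sep_concat_def)

lemma count_list_sep_concat:
  assumes "y \<noteq> Tb" "1 \<le> k"
  shows "count_list (sep_concat f k) y = (\<Sum>i=1..k. count_list (f i) y)"
  using assms(2)
  by (induction k rule: nat_induct_at_least) (simp_all add: sep_concat_Suc assms(1) assms(1)[symmetric])

lemma length_sep_concat:
  "1 \<le> k \<Longrightarrow> length (sep_concat f k) = (\<Sum>i=1..k. length (f i)) + (k - 1)"
  by (induction k rule: nat_induct_at_least) (simp_all add: sep_concat_Suc)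

lemma nocc_sep_concat_ge:
  assumes "\<gamma> \<noteq> []" "1 \<le> k"
  shows "(\<Sum>i=1..k. nocc \<gamma> (f i)) \<le> nocc \<gamma> (sep_concat f k)"
  using assms(2)
proof (induction k rule: nat_induct_at_least)
  case (Suc k)
  have "nocc \<gamma> (sep_concat f k) + nocc \<gamma> ([Tb] @ f (Suc k)) \<le> nocc \<gamma> (sep_concat f (Suc k))"
    using nocc_append_ge[OF assms(1)] Suc.hyps by (simp add: sep_concat_Suc)
  moreover have "nocc \<gamma> [Tb] + nocc \<gamma> (f (Suc k)) \<le> nocc \<gamma> ([Tb] @ f (Suc k))"
    by (rule nocc_append_ge[OF assms(1)])
  ultimately show ?case
    using Suc.IH by simp
qed simp

lemma repl_pair_sep_concat:
  assumes "x \<noteq> Tb"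
  shows "repl [x, x] Y (sep_concat f k) = sep_concat (\<lambda>i. repl [x, x] Y (f i)) k"
proof (induction k)
  case (Suc k)
  then show ?case
    using assms by (cases "k = 0") (simp_all add: sep_concat_Suc repl_pair_append_sep)
qed (simp add: sep_concat_def)

section \<open>The SLP after \<open>t\<close> rounds\<close>

text \<open>\<open>Xsym t\<close> is the nonterminal \<open>NT t\<close> created in round \<open>t\<close>, or \<open>a\<close> for \<open>t = 0\<close>;
  in either case it derives \<open>a\<close> to the power \<open>2\<^sup>t\<close>.\<close>

definition Xsym :: "nat \<Rightarrow> sym" where
  "Xsym t = (if t = 0 then Ta else NT t)"

definition low_bits :: "nat \<Rightarrow> nat \<Rightarrow> sym list" where
  "low_bits n t = concat (map (\<lambda>j. fsym j (odd (n div 2 ^ j))) (rev [0..<t]))"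

definition stage_block :: "nat \<Rightarrow> nat \<Rightarrow> sym list" where
  "stage_block n t = replicate (n div 2 ^ t) (Xsym t) @ low_bits n t"

definition stage_slp :: "(nat \<Rightarrow> nat) \<Rightarrow> nat \<Rightarrow> nat \<Rightarrow> slp" where
  "stage_slp N k t = sep_concat (\<lambda>i. stage_block (N i) t) k # map (\<lambda>j. [Xsym j, Xsym j]) [0..<t]"

lemma Xsym_eq_iff [simp]: "Xsym s = Xsym t \<longleftrightarrow> s = t"
  by (simp add: Xsym_def)

lemma Xsym_neq_Tb [simp]: "Xsym t \<noteq> Tb"
  by (simp add: Xsym_def)

lemma fsym_odd: "fsym j (odd q) = replicate (q mod 2) (Xsym j)"
  by (simp add: fsym_def Xsym_def odd_iff_mod_2_eq_one)

lemma count_list_replicate_self [simp]: "count_list (replicate q x) x = q"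
  by (induction q) auto

lemma div_pow2_Suc: "(n::nat) div 2 ^ Suc t = n div 2 ^ t div 2"
  using div_exp_eq[of n t 1] by simp

lemma low_bits_0 [simp]: "low_bits n 0 = []"
  by (simp add: low_bits_def)

lemma low_bits_Suc: "low_bits n (Suc t) = fsym t (odd (n div 2 ^ t)) @ low_bits n t"
  by (simp add: low_bits_def)

lemma Xsym_notin_low_bits: "t \<le> s \<Longrightarrow> Xsym s \<notin> set (low_bits n t)"
  by (induction t) (auto simp: low_bits_Suc fsym_odd)

lemma length_low_bits: "length (low_bits n t) \<le> t"
  by (induction t) (auto simp: low_bits_Suc fsym_odd)

lemma count_list_stage_block: "count_list (stage_block n t) (Xsym t) = n div 2 ^ t"
  using Xsym_notin_low_bits[of t t n] by (simp add: stage_block_def count_list_0_iff)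

lemma length_stage_block: "length (stage_block n t) \<le> n div 2 ^ t + t"
  using length_low_bits[of n t] by (simp add: stage_block_def)

lemma nocc_stage_block_ge: "n div 2 ^ Suc t \<le> nocc [Xsym t, Xsym t] (stage_block n t)"
proof -
  have "n div 2 ^ t div 2 \<le> nocc [Xsym t, Xsym t] (replicate (n div 2 ^ t) (Xsym t))"
    by (rule nocc_pair_replicate)
  also have "\<dots> \<le> nocc [Xsym t, Xsym t] (stage_block n t)"
    using nocc_append_ge[of "[Xsym t, Xsym t]" "replicate (n div 2 ^ t) (Xsym t)" "low_bits n t"]
    by (simp add: stage_block_def)
  finally show ?thesis
    by (simp only: div_pow2_Suc)
qed

lemma repl_pair_stage_block:
  "repl [Xsym t, Xsym t] (Xsym (Suc t)) (stage_block n t) = stage_block n (Suc t)"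
  using Xsym_notin_low_bits[of t t n]
  by (simp add: stage_block_def repl_pair_replicate_append low_bits_Suc fsym_odd div_pow2_Suc del: power_Suc)

lemma length_stage_slp: "length (stage_slp N k t) = Suc t"
  by (simp add: stage_slp_def)

lemma stage_slp_Suc:
  "map (repl [Xsym t, Xsym t] (NT (length (stage_slp N k t)))) (stage_slp N k t) @ [[Xsym t, Xsym t]]
     = stage_slp N k (Suc t)"
proof -
  have "NT (length (stage_slp N k t)) = Xsym (Suc t)"
    by (simp add: length_stage_slp Xsym_def)
  moreover have "repl [Xsym t, Xsym t] Y [Xsym j, Xsym j] = [Xsym j, Xsym j]" if "j < t" for j Y
    using that by (simp add: repl_pair_notin)
  ultimately show ?thesis
    by (simp add: stage_slp_def repl_pair_sep_concat repl_pair_stage_block)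
qed

section \<open>\<open>X\<^sub>tX\<^sub>t\<close> is the unique most frequent string\<close>

lemma count_list_add_count_list_le: "y \<noteq> x \<Longrightarrow> count_list u y + count_list u x \<le> length u"
  by (induction u) auto

lemma square_plus_lt_pow2: "2 \<le> k \<Longrightarrow> k * k + k < 2 ^ k + (5::nat)"
proof (induction k rule: nat_induct_at_least)
  case (Suc k)
  show ?case
  proof (cases "k = 2")
    case False
    then have "3 \<le> k" "3 * k \<le> k * k"
      using Suc.hyps by simp_all
    moreover have "Suc k * Suc k + Suc k = k * k + 3 * k + 2" "(2::nat) ^ Suc k = 2 * 2 ^ k"
      by simp_all
    ultimately show ?thesis
      using Suc by linarith
  qed simp
qed simp

lemma total_occ_stage_pair_ge:
  "1 \<le> k \<Longrightarrow> (\<Sum>i=1..k. N i div 2 ^ Suc t) \<le> total_occ (stage_slp N k t) [Xsym t, Xsym t]"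
  using nocc_sep_concat_ge[of "[Xsym t, Xsym t]" k "\<lambda>i. stage_block (N i) t"]
    sum_mono[of "{1..k}" "\<lambda>i. N i div 2 ^ Suc t" "\<lambda>i. nocc [Xsym t, Xsym t] (stage_block (N i) t)"]
    nocc_stage_block_ge
  by (fastforce simp: total_occ_def stage_slp_def)

lemma count_list_stage_start:
  "1 \<le> k \<Longrightarrow>
    count_list (sep_concat (\<lambda>i. stage_block (N i) t) k) (Xsym t) = (\<Sum>i=1..k. N i div 2 ^ t)"
  by (simp add: count_list_sep_concat count_list_stage_block)

lemma length_stage_start_le:
  assumes "1 \<le> k"
  shows "length (sep_concat (\<lambda>i. stage_block (N i) t) k) \<le> (\<Sum>i=1..k. N i div 2 ^ t) + k * t + (k - 1)"
proof -
  have "(\<Sum>i=1..k. length (stage_block (N i) t)) \<le> (\<Sum>i=1..k. N i div 2 ^ t + t)"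
    by (rule sum_mono) (rule length_stage_block)
  then show ?thesis
    using assms by (simp add: length_sep_concat sum.distrib)
qed

lemma total_occ_stage_other_le:
  assumes "1 \<le> k" "y \<in> set \<delta>" "y \<noteq> Xsym t"
  shows "total_occ (stage_slp N k t) \<delta> \<le> k * t + (k - 1) + 2 * t"
proof -
  let ?S = "sep_concat (\<lambda>i. stage_block (N i) t) k"
  have "count_list \<delta> y \<noteq> 0"
    using assms(2) by (simp add: count_list_0_iff)
  then have "total_occ (stage_slp N k t) \<delta> \<le> total_occ (stage_slp N k t) \<delta> * count_list \<delta> y"
    by simp
  also have "\<dots> \<le> count_list (concat (stage_slp N k t)) y"
    by (rule total_occ_mult_count_le)
  also have "\<dots> \<le> count_list ?S y + 2 * t"
  proof -
    have "length (concat (map (\<lambda>j. [Xsym j, Xsym j]) [0..<t])) = 2 * t"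
      by (induction t) simp_all
    then show ?thesis
      using count_le_length[of "concat (map (\<lambda>j. [Xsym j, Xsym j]) [0..<t])" y]
      by (simp add: stage_slp_def)
  qed
  also have "count_list ?S y \<le> k * t + (k - 1)"
    using count_list_add_count_list_le[OF assms(3), of ?S]
      length_stage_start_le[OF assms(1), where N = N and t = t]
      count_list_stage_start[OF assms(1), where N = N and t = t] by linarith
  finally show ?thesis
    by simp
qed

lemma total_occ_stage_power_le:
  assumes "1 \<le> k" "set \<delta> \<subseteq> {Xsym t}"
  shows "total_occ (stage_slp N k t) \<delta> * length \<delta> \<le> (\<Sum>i=1..k. N i div 2 ^ t)"
proof -
  have "count_list \<delta> (Xsym t) = length \<delta>"
    using assms(2) by (simp add: count_list_eq_length_filter filter_id_conv subset_iff)
  moreover have "count_list (concat (stage_slp N k t)) (Xsym t) = (\<Sum>i=1..k. N i div 2 ^ t)"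
    using count_list_stage_start[OF assms(1)] by (simp add: stage_slp_def count_list_0_iff)
  ultimately show ?thesis
    using total_occ_mult_count_le[of "stage_slp N k t" \<delta> "Xsym t"] by simp
qed

lemma stage_pair_dominates:
  assumes tk: "t + 2 \<le> k" and Nk: "2 ^ (k + Suc t) \<le> N k"
  defines "c \<equiv> total_occ (stage_slp N k t) [Xsym t, Xsym t]"
  shows "2 \<le> c"
    and "\<And>\<delta>. 2 \<le> length \<delta> \<Longrightarrow> \<delta> \<noteq> [Xsym t, Xsym t] \<Longrightarrow>
      total_occ (stage_slp N k t) \<delta> < c"
proof -
  let ?C = "\<Sum>i=1..k. N i div 2 ^ Suc t"
  let ?Q = "\<Sum>i=1..k. N i div 2 ^ t"
  have k1: "1 \<le> k"
    using tk by simp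
  have C_le_c: "?C \<le> c"
    unfolding c_def using k1 by (rule total_occ_stage_pair_ge)
  have "2 ^ k \<le> N k div 2 ^ Suc t"
    using div_le_mono[OF Nk, of "2 ^ Suc t"] by (simp add: power_add)
  also have "\<dots> \<le> ?C"
    using k1 by (intro member_le_sum) auto
  finally have pow_le_C: "2 ^ k \<le> ?C" .
  have "?Q \<le> (\<Sum>i=1..k. 2 * (N i div 2 ^ Suc t) + 1)"
  proof (intro sum_mono)
    have "q \<le> 2 * (q div 2) + 1" for q :: nat
      by presburger
    then show "N i div 2 ^ t \<le> 2 * (N i div 2 ^ Suc t) + 1" for i
      by (simp only: div_pow2_Suc)
  qed
  then have Q_le: "?Q \<le> 2 * ?C + k"
    by (simp add: sum_Suc sum_distrib_left)
  have "(4::nat) \<le> 2 ^ k"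
    using power_increasing[of 2 k "2::nat"] tk by simp
  then show "2 \<le> c"
    using pow_le_C C_le_c by linarith
  fix \<delta> :: "sym list"
  assume len: "2 \<le> length \<delta>" and ne: "\<delta> \<noteq> [Xsym t, Xsym t]"
  show "total_occ (stage_slp N k t) \<delta> < c"
  proof (cases "set \<delta> \<subseteq> {Xsym t}")
    case True
    have "length \<delta> \<noteq> 2"
      using True ne by (auto simp: length_Suc_conv numeral_2_eq_2)
    then have "total_occ (stage_slp N k t) \<delta> * 3 \<le> total_occ (stage_slp N k t) \<delta> * length \<delta>"
      using len by (intro mult_le_mono2) simp
    also have "\<dots> \<le> ?Q"
      using total_occ_stage_power_le[OF k1 True] .
    finally have "total_occ (stage_slp N k t) \<delta> * 3 \<le> ?Q" .
    moreover have "k < 2 ^ k"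
      by simp
    ultimately show ?thesis
      using Q_le pow_le_C C_le_c by linarith
  next
    case False
    then obtain y where "y \<in> set \<delta>" "y \<noteq> Xsym t"
      by blast
    then have "total_occ (stage_slp N k t) \<delta> \<le> k * t + (k - 1) + 2 * t"
      by (rule total_occ_stage_other_le[OF k1])
    moreover have "k * (t + 2) \<le> k * k"
      using tk by (intro mult_le_mono2)
    moreover have "k * k + k < 2 ^ k + 5"
      using tk by (intro square_plus_lt_pow2) simp
    ultimately show ?thesis
      using tk pow_le_C C_le_c by (simp add: algebra_simps)
  qed
qed

lemma repair_step_stage_slp:
  assumes "t + 2 \<le> k" "2 ^ (k + Suc t) \<le> N k"
  shows "repair_step (stage_slp N k t) G \<longleftrightarrow> G = stage_slp N k (Suc t)"
  using repair_step_unique_max[of "[Xsym t, Xsym t]"] stage_pair_dominates[of t k N, OF assms] stage_slp_Suc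
  by simp

lemma relpowp_repair_step_stage_slp:
  assumes "2 ^ (2 * k - 1) \<le> N k" "n < k"
  shows "(repair_step ^^ n) (stage_slp N k 0) G \<longleftrightarrow> G = stage_slp N k n"
  using assms(2)
proof (induction n arbitrary: G)
  case (Suc n)
  have "(2::nat) ^ (k + Suc n) \<le> 2 ^ (2 * k - 1)"
    using Suc.prems by (intro power_increasing) auto
  then have "repair_step (stage_slp N k n) G \<longleftrightarrow> G = stage_slp N k (Suc n)"
    using Suc.prems assms(1) by (intro repair_step_stage_slp) auto
  then show ?case
    using Suc by (auto simp: relpowp_Suc_right OO_def)
qed auto

section \<open>The input word \<open>s\<^sub>k\<close>\<close>

lemma bin_val_snoc: "bin_val (xs @ [b]) = 2 * bin_val xs + (if b then 1 else 0)"
  by (simp add: bin_val_def)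

lemma bin_val_append: "bin_val (xs @ ys) = bin_val xs * 2 ^ length ys + bin_val ys"
proof (induction ys rule: rev_induct)
  case (snoc y ys)
  then show ?case
    by (simp only: append_assoc[symmetric] bin_val_snoc) (simp add: algebra_simps)
qed (simp add: bin_val_def)

lemma bin_val_True_Cons_ge: "2 ^ length ys \<le> bin_val (True # ys)"
  using bin_val_append[of "[True]" ys] by (simp add: bin_val_def)

lemma odd_bin_val_div_pow2:
  "j < length xs \<Longrightarrow> odd (bin_val xs div 2 ^ j) = xs ! (length xs - 1 - j)"
proof (induction xs arbitrary: j rule: rev_induct)
  case (snoc b xs)
  show ?case
  proof (cases j)
    case (Suc j')
    then have "bin_val (xs @ [b]) div 2 ^ j = bin_val xs div 2 ^ j'"
      by (simp add: bin_val_snoc div_mult2_eq)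
    moreover have "length xs - j < length xs"
      using snoc.prems Suc by simp
    then have "(xs @ [b]) ! (length xs - j) = xs ! (length xs - 1 - j')"
      using Suc by (simp add: nth_append)
    ultimately show ?thesis
      using snoc Suc by simp
  qed (simp add: bin_val_snoc)
qed simp

lemma map_upt_reflect:
  "n \<le> m \<Longrightarrow> map (\<lambda>p. g (m - p)) [m - n + 1..<m + 1] = map g (rev [0..<n])"
proof (induction n)
  case (Suc n)
  then have "[m - Suc n + 1..<m + 1] = (m - n) # [m - n + 1..<m + 1]"
    by (simp add: upt_rec Suc_diff_Suc)
  then show ?case
    using Suc by simp
qed simp

lemma length_hmor: "length (hmor xs) = 2 * length xs"
  by (induction xs) (auto simp: hmor_def)

lemma le_length_de_bruijn_seq:
  assumes "1 \<le> k" "de_bruijn_seq (nat \<lceil>log 2 (real k)\<rceil>) B"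
  shows "k \<le> length B"
proof -
  have "real k = 2 powr log 2 (real k)"
    using assms(1) by simp
  also have "\<dots> \<le> 2 powr (nat \<lceil>log 2 (real k)\<rceil>)"
    by (intro powr_mono) linarith+
  also have "\<dots> = real (length B)"
    using assms(2) by (simp add: de_bruijn_seq_def powr_realpow)
  finally show ?thesis
    by linarith
qed

context
  fixes k :: nat and B :: "bool list"
  assumes k2: "2 \<le> k" and len_B: "k \<le> length B" and hd_B: "hd B"
begin

lemma length_w_word: "length (w_word k B) = 2 * k"
  using len_B by (simp add: w_word_def length_hmor)

lemma w_word_Cons: obtains r where "w_word k B = True # r"
proof -
  obtain B' where "B = True # B'"
    using hd_B len_B k2 by (cases B) auto
  then show ?thesis
    using k2 that by (cases k) (auto simp: w_word_def hmor_def)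
qed

lemma pow2_le_Nval: "1 \<le> i \<Longrightarrow> i \<le> k \<Longrightarrow> 2 ^ (k + i - 1) \<le> Nval k B i"
proof -
  assume i: "1 \<le> i" "i \<le> k"
  obtain r where r: "w_word k B = True # r"
    by (rule w_word_Cons)
  then have "take (k + i) (w_word k B) = True # take (k + i - 1) r"
    using i by (simp add: take_Cons')
  moreover have "length (take (k + i - 1) r) = k + i - 1"
    using r i length_w_word by simp
  ultimately show ?thesis
    unfolding Nval_def using bin_val_True_Cons_ge[of "take (k + i - 1) r"] by simp
qed

lemma low_bits_Nval:
  assumes "1 \<le> i" "i \<le> k"
  shows "low_bits (Nval k B i) (k - 1) = vword k B i"
proof -
  define w where "w = w_word k B"
  define g where "g j = fsym j (w ! (k + i - 1 - j))" for j
  have "odd (Nval k B i div 2 ^ j) = w ! (k + i - 1 - j)" if "j < k - 1" for j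
    using that assms length_w_word odd_bin_val_div_pow2[of j "take (k + i) w"]
    by (simp add: Nval_def w_def)
  then have "low_bits (Nval k B i) (k - 1) = concat (map g (rev [0..<k - 1]))"
    unfolding low_bits_def g_def by (intro arg_cong[where f = concat] map_cong) auto
  also have "map g (rev [0..<k - 1]) = map (\<lambda>p. g (k + i - p)) [i + 2..<k + i + 1]"
    using map_upt_reflect[of "k - 1" "k + i" g] k2 by simp
  also have "\<dots> = map (\<lambda>p. fsym (k + i - p) (w ! (p - 1))) [i + 2..<k + i + 1]"
    by (intro map_cong) (auto simp: g_def)
  finally show ?thesis
    by (simp add: vword_def w_def)
qed

lemma stage_slp_Nval_0: "stage_slp (Nval k B) k 0 = [s_word k B]"
  by (simp add: stage_slp_def sep_concat_def stage_block_def Xsym_def s_word_def)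

lemma stage_slp_Nval_final: "stage_slp (Nval k B) k (k - 1) = expected_slp k B"
proof -
  have "stage_block (Nval k B i) (k - 1) = uword k B i" if "i \<in> {1..k}" for i
    using that low_bits_Nval k2 by (simp add: stage_block_def uword_def qval_def Xsym_def)
  then have "sep_concat (\<lambda>i. stage_block (Nval k B i) (k - 1)) k = sep_concat (uword k B) k"
    unfolding sep_concat_def using k2 by (intro arg_cong2[where f = append] arg_cong[where f = concat] map_cong) auto
  moreover have "map (\<lambda>j. [Xsym j, Xsym j]) [0..<k - 1] =
      [Ta, Ta] # map (\<lambda>i. [NT (i - 1), NT (i - 1)]) [2..<k]"
  proof -
    have "[0..<k - 1] = 0 # [1..<k - 1]" "[2..<k] = map Suc [1..<k - 1]"
      using k2 by (simp_all add: upt_conv_Cons map_Suc_upt numeral_2_eq_2)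
    then show ?thesis
      by (auto simp: Xsym_def)
  qed
  ultimately show ?thesis
    by (simp add: stage_slp_def expected_slp_def sep_concat_def)
qed

lemma pow2_le_qval:
  assumes "1 \<le> i" "i \<le> k"
  shows "2 ^ i \<le> qval k B i"
proof -
  have "k + i - 1 = (k - 1) + i"
    using k2 by simp
  then have "(2::nat) ^ (k + i - 1) div 2 ^ (k - 1) = 2 ^ i"
    by (simp add: power_add)
  then show ?thesis
    using div_le_mono[OF pow2_le_Nval[OF assms], of "2 ^ (k - 1)"] by (simp add: qval_def)
qed

end

theorem mainTheorem4:
  fixes k :: nat and B :: "bool list"
  assumes "k \<ge> 2"
    and "de_bruijn_seq (nat \<lceil>log 2 (real k)\<rceil>) B"
  shows "(\<forall>G. (repair_step ^^ (k - 1)) [s_word k B] G \<longleftrightarrow> G = expected_slp k B) \<and>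
         (\<forall>i\<in>{1..k}. qval k B i \<ge> 2)"
proof -
  have len_B: "k \<le> length B"
    using assms by (intro le_length_de_bruijn_seq) auto
  have hd_B: "hd B"
    using assms(2) by (simp add: de_bruijn_seq_def)
  have "2 ^ (2 * k - 1) \<le> Nval k B k"
    using pow2_le_Nval[OF assms(1) len_B hd_B, of k] assms(1) by (simp add: mult_2)
  then have "(repair_step ^^ (k - 1)) (stage_slp (Nval k B) k 0) G \<longleftrightarrow>
      G = stage_slp (Nval k B) k (k - 1)" for G
    using assms(1) by (intro relpowp_repair_step_stage_slp) auto
  moreover have "2 \<le> qval k B i" if "i \<in> {1..k}" for i
  proof -
    have "(2::nat) ^ 1 \<le> 2 ^ i"
      using that by (intro power_increasing) auto
    then show ?thesis
      using pow2_le_qval[OF assms(1) len_B hd_B, of i] that by simp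
  qed
  ultimately show ?thesis
    using stage_slp_Nval_0[OF assms(1) len_B hd_B] stage_slp_Nval_final[OF assms(1) len_B hd_B]
    by simp
qed

end
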